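(* Let $G$ be the path graph with vertex set $V=\{0,\dots,n-1\}$ and edges $\{v,v+1\}$, let $2^k<n$, and let $T\in\mathcal{T}_k$. For $v\in V$ let $\lambda(v)$ denote the unique leaf $\lambda$ of $T$ with $v\in V(\lambda)$. Then $C(T)$ is a maximal covered set if and only if a) $T$ has exactly $2^k$ leaves, and b) for every vertex $v\in V$ with $v-1\notin C(T)$ and $v\notin C(T)$, we have $\lambda(v-1)=\lambda(v)$.
   Context: A search strategy for a tree $H$ is a rooted binary tree defined recursively: a single node is a search strategy for any $H$; otherwise the root is labeled with an edge $uv$ of $H$ and its two child subtrees are search strategies for the components $H_u,H_v$ of $H-uv$ containing $u,v$. Nodes get vertex sets: the root gets $V(H)$, the children of a root labeled $uv$ get $V(H_u),V(H_v)$, recursively; the leaf sets partition $V$. $C(T)$ is the set of $v$ with $V(\lambda)=\{v\}$ for some leaf $\lambda$. $\mathcal{T}_k$ is the set of search strategies for $G$ of height at most $k$. $C(T)$ is a maximal covered set if there is no $T'\in\mathcal{T}_k$ with $C(T)\subsetneq C(T')$. *)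

theory Defs
  imports Main
begin

definition path_edges :: "nat \<Rightarrow> nat set set" where
  "path_edges n = {{v, Suc v} | v. Suc v < n}"

text \<open>Vertex set of the component of H - uv containing u, where H has vertex set S
  and edges those of E inside S.\<close>
definition comp :: "nat set set \<Rightarrow> nat set \<Rightarrow> nat \<Rightarrow> nat \<Rightarrow> nat set" where
  "comp E S u v = {w \<in> S. (u, w) \<in> ({(x, y). x \<in> S \<and> y \<in> S \<and> {x, y} \<in> E \<and> {x, y} \<noteq> {u, v}})\<^sup>*}"

text \<open>Search strategies: rooted binary trees whose inner nodes are labelled by an edge uv;
  the left child corresponds to H_u, the right child to H_v.\<close>
datatype strat = Leaf | Node nat nat strat strat

fun is_strat :: "nat set set \<Rightarrow> nat set \<Rightarrow> strat \<Rightarrow> bool" where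
  "is_strat E S Leaf = True"
| "is_strat E S (Node u v L R) =
     (u \<in> S \<and> v \<in> S \<and> {u, v} \<in> E \<and>
      is_strat E (comp E S u v) L \<and> is_strat E (comp E S v u) R)"

fun height :: "strat \<Rightarrow> nat" where
  "height Leaf = 0"
| "height (Node u v L R) = Suc (max (height L) (height R))"

fun num_leaves :: "strat \<Rightarrow> nat" where
  "num_leaves Leaf = 1"
| "num_leaves (Node u v L R) = num_leaves L + num_leaves R"

fun leaf_sets :: "nat set set \<Rightarrow> nat set \<Rightarrow> strat \<Rightarrow> nat set set" where
  "leaf_sets E S Leaf = {S}"
| "leaf_sets E S (Node u v L R) = leaf_sets E (comp E S u v) L \<union> leaf_sets E (comp E S v u) R"

definition strategies :: "nat \<Rightarrow> nat \<Rightarrow> strat set" where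
  "strategies n k = {T. is_strat (path_edges n) {0..<n} T \<and> height T \<le> k}"

definition covered :: "nat \<Rightarrow> strat \<Rightarrow> nat set" where
  "covered n T = {v. {v} \<in> leaf_sets (path_edges n) {0..<n} T}"

definition maximal_covered :: "nat \<Rightarrow> nat \<Rightarrow> strat \<Rightarrow> bool" where
  "maximal_covered n k T \<longleftrightarrow> \<not> (\<exists>T' \<in> strategies n k. covered n T \<subset> covered n T')"

definition leaf_of :: "nat \<Rightarrow> strat \<Rightarrow> nat \<Rightarrow> nat set" where
  "leaf_of n T v = (THE X. X \<in> leaf_sets (path_edges n) {0..<n} T \<and> v \<in> X)"

end

theory Submission
  imports Defs
begin

(* A strategy for the path on {a..<b} cuts it at a set of cut points, the upper endpoints of the
   edges labelling its inner nodes. Its leaves are exactly the segments between consecutive cut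
   points, so it has one leaf more than cut points; conversely, splitting at the median cut point
   realises every set of fewer than 2^k cut points by a strategy of height at most k. Hence the
   covered sets are the sets of v such that v and v + 1 are both cut points or ends of the path,
   for cut sets B with |B| < 2^k, and two consecutive vertices share a leaf iff the upper one is
   not a cut point. Maximality then becomes an exchange argument on B: if |B| + 1 < 2^k the least
   non-cut point can be added, and a cut point v with neither v - 1 nor v covered can be moved to
   just above the preceding cut point; in both cases the covered set grows. Conversely, if every
   cut point is next to a covered vertex, any cut set covering more contains B strictly and is
   therefore too large. *)

lemma doubleton_in_path_edges_iff:
  "{x, y} \<in> path_edges n \<longleftrightarrow> (Suc x = y \<and> y < n) \<or> (Suc y = x \<and> x < n)"
  unfolding path_edges_def by (auto simp: doubleton_eq_iff)

lemma rtrancl_of_Suc_steps: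
  assumes "p \<le> q" and "\<And>i. p \<le> i \<Longrightarrow> i < q \<Longrightarrow> (i, Suc i) \<in> R"
  shows "(p, q) \<in> R\<^sup>*"
  using assms
proof (induction q)
  case (Suc q)
  then show ?case
    by (cases "p = Suc q") (auto intro: rtrancl_into_rtrancl)
qed simp

lemma comp_path_cut:
  assumes "a < m" "m < b" "b \<le> n" and edge: "{x, y} = {m - 1, m}"
  shows "comp (path_edges n) {a..<b} x y = {w \<in> {a..<b}. w < m \<longleftrightarrow> x < m}"
proof -
  define R where
    "R = {(p, q). p \<in> {a..<b} \<and> q \<in> {a..<b} \<and> {p, q} \<in> path_edges n \<and> {p, q} \<noteq> {x, y}}"
  have "x = m - 1 \<or> x = m" using edge by (metis insertI1 insertE singletonD)
  then have x_in: "x \<in> {a..<b}" using \<open>a < m\<close> \<open>m < b\<close> by auto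
  have R_iff: "(p, q) \<in> R \<longleftrightarrow>
      p \<in> {a..<b} \<and> q \<in> {a..<b} \<and> (Suc p = q \<or> Suc q = p) \<and> (p < m \<longleftrightarrow> q < m)" for p q
    unfolding R_def doubleton_in_path_edges_iff edge using assms by (auto simp: doubleton_eq_iff)
  have "(p, q) \<in> R\<^sup>*" if "p \<le> q" "p \<in> {a..<b}" "q \<in> {a..<b}" "p < m \<longleftrightarrow> q < m" for p q
    using that by (intro rtrancl_of_Suc_steps) (auto simp: R_iff)
  moreover have "(q, p) \<in> R\<^sup>*" if "p \<le> q" "p \<in> {a..<b}" "q \<in> {a..<b}" "p < m \<longleftrightarrow> q < m" for p q
  proof -
    have "(p, q) \<in> (R\<inverse>)\<^sup>*"
      using that by (intro rtrancl_of_Suc_steps) (auto simp: R_iff)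
    then show ?thesis by (simp add: rtrancl_converse)
  qed
  ultimately have "(x, w) \<in> R\<^sup>*" if "w \<in> {a..<b}" "w < m \<longleftrightarrow> x < m" for w
    using that x_in by (cases "x \<le> w") auto
  moreover have "w \<in> {a..<b} \<and> (w < m \<longleftrightarrow> x < m)" if "(x, w) \<in> R\<^sup>*" for w
    using that by induction (use x_in in \<open>auto simp: R_iff\<close>)
  ultimately show ?thesis
    unfolding comp_def R_def[symmetric] by blast
qed

definition segments :: "nat \<Rightarrow> nat \<Rightarrow> nat set \<Rightarrow> nat set set" where
  "segments a b B =
     {{c..<d} | c d. c \<in> insert a B \<and> d \<in> insert b B \<and> c < d \<and> {c<..<d} \<inter> B = {}}"

lemma segmentI:
  "c \<in> insert a B \<Longrightarrow> d \<in> insert b B \<Longrightarrow> c < d \<Longrightarrow> {c<..<d} \<inter> B = {} \<Longrightarrow>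
    {c..<d} \<in> segments a b B"
  unfolding segments_def by blast

lemma segmentE:
  assumes "X \<in> segments a b B"
  obtains c d where "X = {c..<d}" "c \<in> insert a B" "d \<in> insert b B" "c < d" "{c<..<d} \<inter> B = {}"
  using assms unfolding segments_def by blast

lemma segments_empty: "a < b \<Longrightarrow> segments a b {} = {{a..<b}}"
  unfolding segments_def by auto

lemma segments_insert_cut:
  assumes "a < m" "m < b" "BL \<subseteq> {a<..<m}" "BR \<subseteq> {m<..<b}"
  shows "segments a b (insert m (BL \<union> BR)) = segments a m BL \<union> segments m b BR"
proof -
  have L: "a < x" "x < m" if "x \<in> BL" for x using that assms(3) by auto
  have R: "m < x" "x < b" if "x \<in> BR" for x using that assms(4) by auto
  have split: "c \<in> insert a (insert m (BL \<union> BR)) \<and> d \<in> insert b (insert m (BL \<union> BR)) \<and>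
      c < d \<and> {c<..<d} \<inter> insert m (BL \<union> BR) = {} \<longleftrightarrow>
    (c \<in> insert a BL \<and> d \<in> insert m BL \<and> c < d \<and> {c<..<d} \<inter> BL = {}) \<or>
    (c \<in> insert m BR \<and> d \<in> insert b BR \<and> c < d \<and> {c<..<d} \<inter> BR = {})" for c d
    using assms(1,2) by (cases "c < m"; auto dest: L R; use L(2) R(1) in force)
  then show ?thesis
    unfolding segments_def split by blast
qed

lemma singleton_in_segments_iff: "{v} \<in> segments a b B \<longleftrightarrow> v \<in> insert a B \<and> Suc v \<in> insert b B"
proof
  assume "{v} \<in> segments a b B"
  then obtain c d where cd: "{c..<d} = {v}" "c \<in> insert a B" "d \<in> insert b B" "c < d"
    by (metis segmentE)
  then have "c = v" "d = Suc v"
    using atLeastLessThan_eq_iff[of c d v "Suc v"] by auto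
  with cd show "v \<in> insert a B \<and> Suc v \<in> insert b B" by simp
next
  assume "v \<in> insert a B \<and> Suc v \<in> insert b B"
  then have "{v..<Suc v} \<in> segments a b B"
    by (intro segmentI) auto
  then show "{v} \<in> segments a b B" by simp
qed

lemma segment_unique:
  assumes B: "B \<subseteq> {a<..<b}"
    and X: "X \<in> segments a b B" "w \<in> X" and Y: "Y \<in> segments a b B" "w \<in> Y"
  shows "X = Y"
proof -
  have left_ends: "\<not> c < c'"
    if "c \<in> insert a B" "c' \<in> insert a B" "c' \<le> w" "w < d" "{c<..<d} \<inter> B = {}" for c c' d
    using that B by (auto simp: disjoint_iff)
  have right_ends: "\<not> d < d'"
    if "d \<in> insert b B" "d' \<in> insert b B" "c \<le> w" "w < d" "{c<..<d'} \<inter> B = {}" for c d d'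
    using that B by (auto simp: disjoint_iff)
  obtain c d where "X = {c..<d}" "c \<in> insert a B" "d \<in> insert b B" "{c<..<d} \<inter> B = {}"
    using X(1) by (rule segmentE)
  moreover obtain c' d' where "Y = {c'..<d'}" "c' \<in> insert a B" "d' \<in> insert b B" "{c'<..<d'} \<inter> B = {}"
    using Y(1) by (rule segmentE)
  ultimately show ?thesis
    using X(2) Y(2) left_ends[of c c'] left_ends[of c' c] right_ends[of d d'] right_ends[of d' d]
    by (metis atLeastLessThan_iff linorder_cases)
qed

lemma segment_exists:
  assumes B: "B \<subseteq> {a<..<b}" and w: "a \<le> w" "w < b"
  shows "\<exists>X \<in> segments a b B. w \<in> X"
proof -
  have fin: "finite B" using finite_subset[OF B] by simp
  define c where "c = Max {x \<in> insert a B. x \<le> w}"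
  define d where "d = Min {x \<in> insert b B. w < x}"
  have "c \<in> {x \<in> insert a B. x \<le> w}"
    unfolding c_def by (rule Max_in) (use fin w in auto)
  then have c: "c \<in> insert a B" "c \<le> w" "\<And>x. x \<in> B \<Longrightarrow> x \<le> w \<Longrightarrow> x \<le> c"
    unfolding c_def using fin by auto
  have "d \<in> {x \<in> insert b B. w < x}"
    unfolding d_def by (rule Min_in) (use fin w in auto)
  then have d: "d \<in> insert b B" "w < d" "\<And>x. x \<in> B \<Longrightarrow> w < x \<Longrightarrow> d \<le> x"
    unfolding d_def using fin by auto
  have "{c<..<d} \<inter> B = {}"
    using c(3) d(3) by (force simp: not_le)
  then have "{c..<d} \<in> segments a b B"
    using c d by (intro segmentI) auto
  moreover have "w \<in> {c..<d}"
    using c(2) d(2) by simp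
  ultimately show ?thesis ..
qed

lemma the_segment_eq_Suc_iff:
  assumes B: "B \<subseteq> {a<..<b}" and w: "a \<le> w" "Suc w < b"
  shows "(THE X. X \<in> segments a b B \<and> w \<in> X) = (THE X. X \<in> segments a b B \<and> Suc w \<in> X)
    \<longleftrightarrow> Suc w \<notin> B"
proof -
  have the_segment: "(THE X. X \<in> segments a b B \<and> v \<in> X) \<in> segments a b B \<and>
      v \<in> (THE X. X \<in> segments a b B \<and> v \<in> X)" if v: "a \<le> v" "v < b" for v
  proof -
    obtain X0 where "X0 \<in> segments a b B" "v \<in> X0"
      using segment_exists[OF B v] by blast
    then have "\<exists>!X. X \<in> segments a b B \<and> v \<in> X"
      using segment_unique[OF B] by (intro ex1I[of _ X0]) auto
    then show ?thesis by (rule theI')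
  qed
  define X where "X = (THE X. X \<in> segments a b B \<and> w \<in> X)"
  define Y where "Y = (THE X. X \<in> segments a b B \<and> Suc w \<in> X)"
  have X: "X \<in> segments a b B" "w \<in> X" and Y: "Y \<in> segments a b B" "Suc w \<in> Y"
    using the_segment[of w] the_segment[of "Suc w"] w unfolding X_def Y_def by auto
  obtain c d where cd: "X = {c..<d}" "d \<in> insert b B" "{c<..<d} \<inter> B = {}"
    using X(1) by (rule segmentE)
  have "c \<le> w" "w < d" using X(2) cd(1) by auto
  have "X = Y \<longleftrightarrow> Suc w \<in> X"
    using segment_unique[OF B X(1) _ Y(1)] Y(2) by blast
  also have "\<dots> \<longleftrightarrow> Suc w \<notin> B"
    using cd \<open>c \<le> w\<close> \<open>w < d\<close> w(2) by (auto simp: disjoint_iff intro: Suc_lessI)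
  finally show ?thesis
    unfolding X_def Y_def .
qed

(* Cutting the path at the edge {m - 1, m} is recorded by the cut point m. *)
fun cuts :: "strat \<Rightarrow> nat set" where
  "cuts Leaf = {}"
| "cuts (Node u v L R) = insert (max u v) (cuts L \<union> cuts R)"

lemma num_leaves_le_pow_height: "num_leaves T \<le> 2 ^ height T"
proof (induction T)
  case (Node u v L R)
  have "num_leaves L + num_leaves R \<le> 2 ^ max (height L) (height R) + 2 ^ max (height L) (height R)"
    using Node.IH
    by (intro add_mono; meson le_trans max.cobounded1 max.cobounded2 one_le_numeral power_increasing)
  then show ?case by simp
qed simp

lemma is_strat_path_NodeE:
  assumes "is_strat (path_edges n) {a..<b} (Node u v L R)" "b \<le> n"
  obtains m :: nat and lo hi :: strat
  where "a < m" "m < b" "max u v = m" "(lo, hi) = (L, R) \<or> (lo, hi) = (R, L)"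
    "is_strat (path_edges n) {a..<m} lo" "is_strat (path_edges n) {m..<b} hi"
    "leaf_sets (path_edges n) {a..<b} (Node u v L R) =
       leaf_sets (path_edges n) {a..<m} lo \<union> leaf_sets (path_edges n) {m..<b} hi"
proof -
  define m where "m = max u v"
  have uv: "u \<in> {a..<b}" "v \<in> {a..<b}" "Suc u = v \<or> Suc v = u"
    using assms by (auto simp: doubleton_in_path_edges_iff)
  then have m: "a < m" "m < b" "{u, v} = {m - 1, m}" "{v, u} = {m - 1, m}"
    unfolding m_def by auto
  note cut = comp_path_cut[OF m(1,2) assms(2) m(3)] comp_path_cut[OF m(1,2) assms(2) m(4)]
  show thesis
  proof (cases "u < v")
    case True
    then have "u < m" "v = m"
      unfolding m_def by auto
    then have "comp (path_edges n) {a..<b} u v = {a..<m}" "comp (path_edges n) {a..<b} v u = {m..<b}"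
      unfolding cut using m(1,2) by auto
    then show thesis
      using assms m(1,2) by (intro that[of m L R]) (simp_all add: m_def)
  next
    case False
    then have "u = m" "v < m"
      using uv(3) unfolding m_def by auto
    then have "comp (path_edges n) {a..<b} u v = {m..<b}" "comp (path_edges n) {a..<b} v u = {a..<m}"
      unfolding cut using m(1,2) by auto
    then show thesis
      using assms m(1,2) by (intro that[of m R L]) (simp_all add: m_def Un_commute)
  qed
qed

lemma path_strategy_segments:
  assumes "is_strat (path_edges n) {a..<b} T" "a < b" "b \<le> n"
  shows "cuts T \<subseteq> {a<..<b} \<and> card (cuts T) + 1 = num_leaves T \<and>
    leaf_sets (path_edges n) {a..<b} T = segments a b (cuts T)"
  using assms
proof (induction T arbitrary: a b)
  case Leaf
  then show ?case by (simp add: segments_empty)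
next
  case (Node u v L R)
  obtain m lo hi where m: "a < m" "m < b" "max u v = m"
    and lo_hi: "(lo, hi) = (L, R) \<or> (lo, hi) = (R, L)"
    and strat: "is_strat (path_edges n) {a..<m} lo" "is_strat (path_edges n) {m..<b} hi"
    and leaves: "leaf_sets (path_edges n) {a..<b} (Node u v L R) =
       leaf_sets (path_edges n) {a..<m} lo \<union> leaf_sets (path_edges n) {m..<b} hi"
    using is_strat_path_NodeE[OF Node.prems(1,3)] by blast
  have subtree: "cuts S \<subseteq> {c<..<d} \<and> card (cuts S) + 1 = num_leaves S \<and>
      leaf_sets (path_edges n) {c..<d} S = segments c d (cuts S)"
    if "S = L \<or> S = R" "is_strat (path_edges n) {c..<d} S" "c < d" "d \<le> n" for S c d
    using that Node.IH by blast
  have "lo = L \<or> lo = R" "hi = L \<or> hi = R"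
    using lo_hi by auto
  then have IH: "cuts lo \<subseteq> {a<..<m} \<and> card (cuts lo) + 1 = num_leaves lo \<and>
      leaf_sets (path_edges n) {a..<m} lo = segments a m (cuts lo)"
    "cuts hi \<subseteq> {m<..<b} \<and> card (cuts hi) + 1 = num_leaves hi \<and>
      leaf_sets (path_edges n) {m..<b} hi = segments m b (cuts hi)"
    using subtree strat m(1,2) Node.prems(3) by auto
  have cuts: "cuts (Node u v L R) = insert m (cuts lo \<union> cuts hi)"
    and num: "num_leaves (Node u v L R) = num_leaves lo + num_leaves hi"
    using lo_hi m(3) by auto
  have "finite (cuts lo)" "finite (cuts hi)" "m \<notin> cuts lo \<union> cuts hi"
    using IH by (auto intro: finite_subset)
  moreover have "cuts lo \<inter> cuts hi = {}"
    using IH by (fastforce simp: subset_iff)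
  ultimately have "card (cuts (Node u v L R)) = Suc (card (cuts lo) + card (cuts hi))"
    unfolding cuts by (simp add: card_Un_disjoint)
  then show ?case
    using IH m(1,2) unfolding cuts num leaves by (auto simp: segments_insert_cut)
qed

lemma card_less_image:
  fixes B :: "'a::linorder set"
  assumes "finite B"
  shows "(\<lambda>m. card {x \<in> B. x < m}) ` B = {..<card B}"
proof (rule card_subset_eq)
  let ?rank = "\<lambda>m. card {x \<in> B. x < m}"
  have "strict_mono_on B ?rank"
  proof (rule strict_mono_onI)
    fix m m' assume "m \<in> B" "m' \<in> B" "m < m'"
    then have "{x \<in> B. x < m} \<subset> {x \<in> B. x < m'}" by auto
    then show "?rank m < ?rank m'" using assms by (simp add: psubset_card_mono)
  qed
  then show "card (?rank ` B) = card {..<card B}"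
    by (simp add: card_image strict_mono_on_imp_inj_on)
  have "?rank m < card B" if "m \<in> B" for m
    using that assms by (intro psubset_card_mono) auto
  then show "?rank ` B \<subseteq> {..<card B}" by auto
qed simp

lemma path_strategy_with_cuts:
  assumes "B \<subseteq> {a<..<b}" "card B < 2 ^ k" "b \<le> n"
  shows "\<exists>T. is_strat (path_edges n) {a..<b} T \<and> height T \<le> k \<and> cuts T = B"
  using assms
proof (induction k arbitrary: a b B)
  case 0
  then have "B = {}" using finite_subset[OF 0(1)] by simp
  then show ?case by (intro exI[of _ Leaf]) auto
next
  case (Suc k)
  have fin: "finite B" using finite_subset[OF Suc.prems(1)] by simp
  show ?case
  proof (cases "B = {}")
    case True
    then show ?thesis by (intro exI[of _ Leaf]) auto
  next
    case False
    then have "card B div 2 < card B" using fin by (simp add: card_gt_0_iff)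
    then obtain m where m: "m \<in> B" "card {x \<in> B. x < m} = card B div 2"
      using card_less_image[OF fin] by (metis (no_types, lifting) imageE lessThan_iff)
    define BL where "BL = {x \<in> B. x < m}"
    define BR where "BR = {x \<in> B. m < x}"
    have B: "B = insert m (BL \<union> BR)" "finite BL" "finite BR" "BL \<inter> BR = {}" "m \<notin> BL \<union> BR"
      using m(1) fin unfolding BL_def BR_def by auto
    then have "card B = Suc (card BL + card BR)"
      by (simp add: card_Un_disjoint)
    moreover have "card BL = card B div 2" "card B < 2 * 2 ^ k"
      using m(2) Suc.prems(2) unfolding BL_def by simp_all
    ultimately have card: "card BL < 2 ^ k" "card BR < 2 ^ k"
      by linarith+
    have m_between: "a < m" "m < b" and sub: "BL \<subseteq> {a<..<m}" "BR \<subseteq> {m<..<b}"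
      using m(1) Suc.prems(1) unfolding BL_def BR_def by auto
    obtain TL TR where TL: "is_strat (path_edges n) {a..<m} TL" "height TL \<le> k" "cuts TL = BL"
      and TR: "is_strat (path_edges n) {m..<b} TR" "height TR \<le> k" "cuts TR = BR"
      using Suc.IH[OF sub(1) card(1)] Suc.IH[OF sub(2) card(2)] m_between Suc.prems(3) by auto
    have "comp (path_edges n) {a..<b} (m - 1) m = {a..<m}"
      "comp (path_edges n) {a..<b} m (m - 1) = {m..<b}"
      using m_between unfolding comp_path_cut[OF m_between Suc.prems(3) refl]
        comp_path_cut[OF m_between Suc.prems(3) insert_commute] by auto
    moreover have "{m - 1, m} \<in> path_edges n"
      using m_between Suc.prems(3) by (simp add: doubleton_in_path_edges_iff)
    ultimately have "is_strat (path_edges n) {a..<b} (Node (m - 1) m TL TR)"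
      using TL(1) TR(1) m_between by (simp; linarith)
    moreover have "cuts (Node (m - 1) m TL TR) = B"
      using TL TR B by (simp add: max_def)
    ultimately show ?thesis
      using TL TR by (intro exI[of _ "Node (m - 1) m TL TR"]) auto
  qed
qed

definition cut_cover :: "nat \<Rightarrow> nat set \<Rightarrow> nat set" where
  "cut_cover n B = {v. v \<in> insert 0 B \<and> Suc v \<in> insert n B}"

lemma covered_eq_cut_cover:
  assumes "is_strat (path_edges n) {0..<n} T" "0 < n"
  shows "covered n T = cut_cover n (cuts T)"
  using path_strategy_segments[OF assms order_refl]
  unfolding covered_def cut_cover_def by (simp add: singleton_in_segments_iff)

lemma card_cuts_less:
  assumes "T \<in> strategies n k" "0 < n"
  shows "card (cuts T) < 2 ^ k"
proof -
  have "card (cuts T) + 1 = num_leaves T"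
    using assms path_strategy_segments[OF _ assms(2) order_refl] by (simp add: strategies_def)
  also have "\<dots> \<le> 2 ^ height T"
    by (rule num_leaves_le_pow_height)
  also have "\<dots> \<le> 2 ^ k"
    using assms(1) by (simp add: strategies_def)
  finally show ?thesis by simp
qed

lemma covered_strategies:
  assumes "0 < n"
  shows "covered n ` strategies n k = cut_cover n ` {B. B \<subseteq> {0<..<n} \<and> card B < 2 ^ k}"
proof (intro equalityI subsetI)
  fix C assume "C \<in> covered n ` strategies n k"
  then obtain T where T: "T \<in> strategies n k" "C = covered n T" by blast
  then have strat: "is_strat (path_edges n) {0..<n} T"
    by (simp add: strategies_def)
  have "cuts T \<subseteq> {0<..<n}"
    using path_strategy_segments[OF strat assms order_refl] by blast
  moreover have "C = cut_cover n (cuts T)"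
    using covered_eq_cut_cover[OF strat assms] T(2) by simp
  ultimately show "C \<in> cut_cover n ` {B. B \<subseteq> {0<..<n} \<and> card B < 2 ^ k}"
    using card_cuts_less[OF T(1) assms] by blast
next
  fix C assume "C \<in> cut_cover n ` {B. B \<subseteq> {0<..<n} \<and> card B < 2 ^ k}"
  then obtain B where B: "B \<subseteq> {0<..<n}" "card B < 2 ^ k" "C = cut_cover n B" by blast
  then obtain T where "is_strat (path_edges n) {0..<n} T" "height T \<le> k" "cuts T = B"
    using path_strategy_with_cuts[OF B(1,2) order_refl] by blast
  then show "C \<in> covered n ` strategies n k"
    using B(3) covered_eq_cut_cover[OF _ assms] by (auto simp: strategies_def)
qed

lemma cut_cover_mono: "B \<subseteq> B' \<Longrightarrow> cut_cover n B \<subseteq> cut_cover n B'"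
  unfolding cut_cover_def by auto

lemma cut_cover_psubset_insert:
  assumes "B \<subseteq> {0<..<n}" "\<not> {0<..<n} \<subseteq> B"
  obtains x where "x \<in> {0<..<n}" "x \<notin> B" "cut_cover n B \<subset> cut_cover n (insert x B)"
proof -
  define x where "x = (LEAST x. x \<in> {0<..<n} \<and> x \<notin> B)"
  have x: "x \<in> {0<..<n}" "x \<notin> B"
    using LeastI_ex[of "\<lambda>x. x \<in> {0<..<n} \<and> x \<notin> B"] assms(2) unfolding x_def by blast+
  have "x - 1 \<in> insert 0 B"
    using not_less_Least[of "x - 1" "\<lambda>x. x \<in> {0<..<n} \<and> x \<notin> B"] x unfolding x_def[symmetric]
    by (cases "x - 1 = 0") auto
  then have "x - 1 \<in> cut_cover n (insert x B) - cut_cover n B"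
    using x unfolding cut_cover_def by auto
  moreover have "cut_cover n B \<subseteq> cut_cover n (insert x B)"
    by (rule cut_cover_mono) auto
  ultimately show thesis
    using that x by blast
qed

lemma cut_cover_psubset_move:
  assumes B: "B \<subseteq> {0<..<n}" and v: "v \<in> B" "v - 1 \<notin> cut_cover n B" "v \<notin> cut_cover n B"
  obtains x where "x \<in> {0<..<n}" "x \<notin> B" "cut_cover n B \<subset> cut_cover n (insert x (B - {v}))"
proof -
  have fin: "finite {y \<in> insert 0 B. y < v}"
    using finite_subset[OF B] by simp
  define c where "c = Max {y \<in> insert 0 B. y < v}"
  have "0 < v"
    using v(1) B by auto
  then have "c \<in> {y \<in> insert 0 B. y < v}"
    unfolding c_def by (intro Max_in fin) auto
  then have c: "c \<in> insert 0 B" "c < v" by auto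
  have "Suc c \<noteq> v"
    using c v unfolding cut_cover_def by auto
  then have Suc_c: "Suc c < v" "Suc c \<notin> B"
    using c Max_ge[OF fin, of "Suc c"] unfolding c_def[symmetric] by auto
  have "cut_cover n B \<subseteq> cut_cover n (insert (Suc c) (B - {v}))"
    using v(2,3) unfolding cut_cover_def by auto
  moreover have "c \<in> cut_cover n (insert (Suc c) (B - {v})) - cut_cover n B"
    using c Suc_c v(1) B unfolding cut_cover_def by auto
  ultimately have "cut_cover n B \<subset> cut_cover n (insert (Suc c) (B - {v}))"
    by blast
  moreover have "Suc c \<in> {0<..<n}"
    using Suc_c(1) v(1) B by auto
  ultimately show thesis
    using that Suc_c(2) by blast
qed

lemma subset_if_cut_cover_subset:
  assumes "B \<subseteq> {0<..<n}" "\<forall>v \<in> B. v - 1 \<in> cut_cover n B \<or> v \<in> cut_cover n B"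
    and "cut_cover n B \<subseteq> cut_cover n B'"
  shows "B \<subseteq> B'"
proof
  fix v assume "v \<in> B"
  then have "0 < v" "v < n" "v - 1 \<in> cut_cover n B' \<or> v \<in> cut_cover n B'"
    using assms by auto
  then show "v \<in> B'"
    unfolding cut_cover_def by auto
qed

lemma cut_cover_maximal_iff:
  assumes B: "B \<subseteq> {0<..<n}" and k: "card B < 2 ^ k" "2 ^ k < n"
  shows "(\<nexists>B'. B' \<subseteq> {0<..<n} \<and> card B' < 2 ^ k \<and> cut_cover n B \<subset> cut_cover n B') \<longleftrightarrow>
    card B + 1 = 2 ^ k \<and> (\<forall>v \<in> B. v - 1 \<in> cut_cover n B \<or> v \<in> cut_cover n B)"
proof
  assume maximal: "\<nexists>B'. B' \<subseteq> {0<..<n} \<and> card B' < 2 ^ k \<and> cut_cover n B \<subset> cut_cover n B'"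
  have fin: "finite B" using finite_subset[OF B] by simp
  show "card B + 1 = 2 ^ k \<and> (\<forall>v \<in> B. v - 1 \<in> cut_cover n B \<or> v \<in> cut_cover n B)"
  proof (intro conjI ballI)
    show "card B + 1 = 2 ^ k"
    proof (rule ccontr)
      assume "card B + 1 \<noteq> 2 ^ k"
      then have "card B + 1 < 2 ^ k" using k(1) by simp
      moreover have "card B < card {0<..<n}"
        using \<open>card B + 1 < 2 ^ k\<close> k(2) by simp
      then have "\<not> {0<..<n} \<subseteq> B"
        by (metis card_mono fin leD)
      then obtain x where x: "x \<in> {0<..<n}" "x \<notin> B" "cut_cover n B \<subset> cut_cover n (insert x B)"
        using cut_cover_psubset_insert[OF B] by blast
      ultimately have "insert x B \<subseteq> {0<..<n}" "card (insert x B) < 2 ^ k"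
        using B fin by auto
      with x(3) maximal show False by blast
    qed
  next
    fix v assume "v \<in> B"
    show "v - 1 \<in> cut_cover n B \<or> v \<in> cut_cover n B"
    proof (rule ccontr)
      assume "\<not> (v - 1 \<in> cut_cover n B \<or> v \<in> cut_cover n B)"
      then obtain x where x: "x \<in> {0<..<n}" "x \<notin> B" "cut_cover n B \<subset> cut_cover n (insert x (B - {v}))"
        using cut_cover_psubset_move[OF B \<open>v \<in> B\<close>] by blast
      have "card (insert x (B - {v})) = card B"
        using fin x(2) card_Suc_Diff1[OF fin \<open>v \<in> B\<close>] by simp
      moreover have "insert x (B - {v}) \<subseteq> {0<..<n}"
        using B x(1) by auto
      ultimately show False
        using maximal x(3) k(1) by auto
    qed
  qed
next
  assume "card B + 1 = 2 ^ k \<and> (\<forall>v \<in> B. v - 1 \<in> cut_cover n B \<or> v \<in> cut_cover n B)"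
  then have card: "card B + 1 = 2 ^ k"
    and adjacent: "\<forall>v \<in> B. v - 1 \<in> cut_cover n B \<or> v \<in> cut_cover n B"
    by auto
  show "\<nexists>B'. B' \<subseteq> {0<..<n} \<and> card B' < 2 ^ k \<and> cut_cover n B \<subset> cut_cover n B'"
  proof
    assume "\<exists>B'. B' \<subseteq> {0<..<n} \<and> card B' < 2 ^ k \<and> cut_cover n B \<subset> cut_cover n B'"
    then obtain B' where B': "B' \<subseteq> {0<..<n}" "card B' < 2 ^ k" "cut_cover n B \<subset> cut_cover n B'"
      by blast
    then have "B \<subset> B'"
      using subset_if_cut_cover_subset[OF B adjacent] by blast
    then have "card B < card B'"
      using finite_subset[OF B'(1)] by (simp add: psubset_card_mono)
    with card B'(2) show False by simp
  qed
qed

theorem lemmaA2: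
  fixes n k :: nat and T :: strat
  assumes "2 ^ k < n"
    and "T \<in> strategies n k"
  shows "maximal_covered n k T \<longleftrightarrow>
           (num_leaves T = 2 ^ k \<and>
            (\<forall>v \<in> {0..<n}. 0 < v \<longrightarrow> v - 1 \<notin> covered n T \<longrightarrow> v \<notin> covered n T \<longrightarrow>
               leaf_of n T (v - 1) = leaf_of n T v))"
proof -
  have n: "0 < n"
    using assms(1) by (intro gr0I) simp
  have strat: "is_strat (path_edges n) {0..<n} T"
    using assms(2) by (simp add: strategies_def)
  define B where "B = cuts T"
  have B: "B \<subseteq> {0<..<n}" "card B + 1 = num_leaves T"
    "leaf_sets (path_edges n) {0..<n} T = segments 0 n B"
    using path_strategy_segments[OF strat n order_refl] unfolding B_def by auto
  have cover: "covered n T = cut_cover n B"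
    unfolding B_def by (rule covered_eq_cut_cover[OF strat n])
  have leaf_of: "leaf_of n T (v - 1) = leaf_of n T v \<longleftrightarrow> v \<notin> B" if "0 < v" "v < n" for v
    using the_segment_eq_Suc_iff[OF B(1), of "v - 1"] that unfolding leaf_of_def B(3) by simp
  have "maximal_covered n k T \<longleftrightarrow>
      (\<nexists>C. C \<in> covered n ` strategies n k \<and> cut_cover n B \<subset> C)"
    unfolding maximal_covered_def cover by blast
  also have "\<dots> \<longleftrightarrow> (\<nexists>B'. B' \<subseteq> {0<..<n} \<and> card B' < 2 ^ k \<and> cut_cover n B \<subset> cut_cover n B')"
    unfolding covered_strategies[OF n] by blast
  also have "\<dots> \<longleftrightarrow>
      card B + 1 = 2 ^ k \<and> (\<forall>v \<in> B. v - 1 \<in> cut_cover n B \<or> v \<in> cut_cover n B)"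
    using cut_cover_maximal_iff[OF B(1) _ assms(1)] card_cuts_less[OF assms(2) n]
    unfolding B_def by blast
  also have "\<dots> \<longleftrightarrow> num_leaves T = 2 ^ k \<and>
      (\<forall>v \<in> {0..<n}. 0 < v \<longrightarrow> v - 1 \<notin> covered n T \<longrightarrow> v \<notin> covered n T \<longrightarrow>
        leaf_of n T (v - 1) = leaf_of n T v)"
    using B(1,2) leaf_of unfolding cover
    by (metis atLeastLessThan_iff greaterThanLessThan_iff subsetD zero_le)
  finally show ?thesis .
qed

end
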